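(* Let $X_1, X_2, \ldots$ be independent random variables, each uniformly distributed on $[-1,1]$, and let $\varepsilon \in (0, 1/3)$. For $t \ge 0$ and $z \in \mathbb{R}$, let $f_t(z) = 1$ if there exists $S \subseteq \{1,\dots,t\}$ with $\lvert z - \sum_{i \in S} X_i \rvert < \varepsilon$, and $f_t(z) = 0$ otherwise; let $v_t = \frac{1}{2}\int_{-1}^{1} f_t(z)\,\mathrm{d}z$, let $\tau_1 = \min\{t \ge 0 : v_t > 1/2\}$, for $t \ge 0$ let $w_t = 1 - v_{\tau_1+t}$, let $\tau_2 = \min\{t \ge 0 : w_t \le \varepsilon/2\}$, and let $\tau = \tau_1 + \tau_2$ (the first time at which $v_t \ge 1 - \varepsilon/2$). There exist constants $C' > 0$ and $\kappa > 0$ (not depending on $\varepsilon$) such that for every $t \ge C' \log\frac{1}{\varepsilon}$, $$\Pr[\tau \le t] \ge 1 - 2\exp\left[-\frac{1}{\kappa t}\left(t - C'\log\frac{1}{\varepsilon}\right)^2\right].$$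
   Context: $f_t$ is the indicator that $z$ can be approximated to within error strictly less than $\varepsilon$ by a subset sum of the first $t$ variables (the empty sum being $0$); $v_t$ is the fraction of $[-1,1]$ so approximated. $\log$ denotes the natural logarithm. *)

theory Defs
  imports "HOL-Probability.Probability"
begin

definition approx_t :: "real \<Rightarrow> (nat \<Rightarrow> 'a \<Rightarrow> real) \<Rightarrow> nat \<Rightarrow> 'a \<Rightarrow> real \<Rightarrow> bool" where
  "approx_t eps X t \<omega> z = (\<exists>S \<subseteq> {1..t}. \<bar>z - (\<Sum>i\<in>S. X i \<omega>)\<bar> < eps)"

definition f_t :: "real \<Rightarrow> (nat \<Rightarrow> 'a \<Rightarrow> real) \<Rightarrow> nat \<Rightarrow> 'a \<Rightarrow> real \<Rightarrow> real" where
  "f_t eps X t \<omega> z = (if approx_t eps X t \<omega> z then 1 else 0)"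

definition v_t :: "real \<Rightarrow> (nat \<Rightarrow> 'a \<Rightarrow> real) \<Rightarrow> nat \<Rightarrow> 'a \<Rightarrow> real" where
  "v_t eps X t \<omega> = (1/2) * (LBINT z=-1..1. f_t eps X t \<omega> z)"

definition hit_time :: "(nat \<Rightarrow> bool) \<Rightarrow> enat" where
  "hit_time P = (if \<exists>t. P t then enat (LEAST t. P t) else \<infinity>)"

definition tau1 :: "real \<Rightarrow> (nat \<Rightarrow> 'a \<Rightarrow> real) \<Rightarrow> 'a \<Rightarrow> enat" where
  "tau1 eps X \<omega> = hit_time (\<lambda>t. v_t eps X t \<omega> > 1/2)"

definition tau :: "real \<Rightarrow> (nat \<Rightarrow> 'a \<Rightarrow> real) \<Rightarrow> 'a \<Rightarrow> enat" where
  "tau eps X \<omega> = (case tau1 eps X \<omega> of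
      enat t1 \<Rightarrow> enat t1 + hit_time (\<lambda>t. 1 - v_t eps X (t1 + t) \<omega> \<le> eps / 2)
    | \<infinity> \<Rightarrow> \<infinity>)"

end

theory Submission
  imports Defs
begin

text \<open>Let b_t = 2 v_t be the measure of the part B_t of (-1,1) covered after t steps and
  U_t = (-1,1) - B_t. A new step X_{t+1} = y additionally covers the points z \<in> U_t with
  z - y \<in> B_t. By Fubini, the average over y \<in> [-1,1] of the measure of this overlap is
  the integral over B_t of |U_t \<inter> [w-1,w+1]|, which is at least min(b_t, 2 - b_t)/8; hence with
  probability at least 1/32 the covered measure grows by min(b_t, 2 - b_t)/32. Such a step
  lowers the potential exp(-g b), where g b = 33 ln b for b < 1 and g b = 1 - 32 ln (2 - b)
  otherwise, by the factor 1/e, so the expected potential shrinks by 63/64 per step until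
  b \<ge> 2 - eps. Markov's inequality then gives P(tau > t) \<le> e^(1 + 65 L) (63/64)^t with
  L = ln(1/eps), a bound of the required form for C' = 4352 and kappa = 64.\<close>

section \<open>Measure of bounded sets of reals\<close>

lemma fmeasurable_subset_Icc:
  fixes A :: "real set"
  assumes "A \<in> sets borel" "A \<subseteq> {a..b}"
  shows "A \<in> fmeasurable lborel"
proof (rule fmeasurableI2)
  show "{a..b} \<in> fmeasurable lborel" using fmeasurable_cbox[of a b] by simp
qed (use assms in auto)

lemma emeasure_eq_measure_subset_Icc:
  fixes A :: "real set"
  assumes "A \<in> sets borel" "A \<subseteq> {a..b}"
  shows "emeasure lborel A = ennreal (measure lborel A)"
  using fmeasurable_subset_Icc[OF assms] by (simp add: emeasure_eq_measure2)

lemma measure_le_Un_of_subset_Icc: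
  fixes A B C :: "real set"
  assumes "A \<in> sets borel" "B \<in> sets borel" "C \<in> sets borel"
    and "B \<subseteq> {a..b}" "C \<subseteq> {a..b}" "A \<subseteq> B \<union> C"
  shows "measure lborel A \<le> measure lborel B + measure lborel C"
proof -
  have "measure lborel A \<le> measure lborel (B \<union> C)"
    using assms by (intro measure_mono_fmeasurable fmeasurable_subset_Icc) auto
  also have "\<dots> \<le> measure lborel B + measure lborel C"
    using assms by (intro measure_Un_le) auto
  finally show ?thesis .
qed

lemma measure_Ioo_Diff:
  fixes S :: "real set"
  assumes "S \<in> sets borel" "S \<subseteq> {-1<..<1}"
  shows "measure lborel ({-1<..<1} - S) = 2 - measure lborel S"
  using assms by (subst measure_Diff) auto

lemma emeasure_lborel_translate:
  fixes B :: "real set"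
  assumes [measurable]: "B \<in> sets borel"
  shows "emeasure lborel {z. z - y \<in> B} = emeasure lborel B"
proof -
  have "emeasure lborel B = emeasure (distr lborel borel ((+) (- y))) B"
    by (simp add: lborel_distr_plus)
  also have "\<dots> = emeasure lborel {z. z - y \<in> B}"
    by (subst emeasure_distr) (auto intro!: arg_cong[where f = "emeasure lborel"])
  finally show ?thesis ..
qed

lemma measure_level_set_ge:
  fixes f :: "real \<Rightarrow> ennreal" and A :: "real set"
  assumes [measurable]: "f \<in> borel_measurable borel" and A: "A \<in> fmeasurable lborel"
    and f_le: "\<And>y. y \<in> A \<Longrightarrow> f y \<le> ennreal m" and "0 \<le> m" "0 \<le> d"
    and c_le: "ennreal c \<le> (\<integral>\<^sup>+y. indicator A y * f y \<partial>lborel)"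
  shows "c \<le> m * measure lborel ({y. ennreal d \<le> f y} \<inter> A) + d * measure lborel A"
proof -
  define G where "G = {y. ennreal d \<le> f y} \<inter> A"
  have [measurable]: "A \<in> sets borel" using A by (simp add: fmeasurable_def)
  have G: "G \<in> fmeasurable lborel"
    using A unfolding G_def by (intro fmeasurableI2[OF A]) auto
  have "(\<integral>\<^sup>+y. indicator A y * f y \<partial>lborel)
      \<le> (\<integral>\<^sup>+y. ennreal m * indicator G y + ennreal d * indicator A y \<partial>lborel)"
  proof (intro nn_integral_mono)
    fix y
    show "indicator A y * f y \<le> ennreal m * indicator G y + ennreal d * indicator A y"
    proof (cases "y \<in> G")
      case True
      then have "f y \<le> ennreal m" using f_le unfolding G_def by auto
      with True show ?thesis unfolding G_def by (simp add: add_increasing2)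
    qed (auto simp: G_def split: split_indicator)
  qed
  also have "\<dots> = ennreal m * emeasure lborel G + ennreal d * emeasure lborel A"
    using G by (subst nn_integral_add) (auto simp: nn_integral_cmult_indicator)
  also have "\<dots> = ennreal (m * measure lborel G + d * measure lborel A)"
    using G A assms(4,5)
    by (simp add: emeasure_eq_measure2 ennreal_mult[symmetric] ennreal_plus[symmetric] del: ennreal_plus)
  finally have "ennreal c \<le> ennreal (m * measure lborel G + d * measure lborel A)"
    by (rule order.trans[OF c_le])
  then show ?thesis using assms(4,5) unfolding G_def by (subst (asm) ennreal_le_iff) auto
qed

lemma (in prob_space) nn_integral_le_contraction:
  fixes f :: "'a \<Rightarrow> ennreal"
  assumes G: "G \<in> events" and p: "p \<le> prob G" and q: "0 \<le> q" "q \<le> 1" and K: "0 \<le> K"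
    and f_le: "\<And>x. x \<in> space M \<Longrightarrow> f x \<le> ennreal K"
    and f_le_on_G: "\<And>x. x \<in> G \<Longrightarrow> f x \<le> ennreal (q * K)"
  shows "(\<integral>\<^sup>+x. f x \<partial>M) \<le> ennreal ((1 - p * (1 - q)) * K)"
proof -
  have "(\<integral>\<^sup>+x. f x \<partial>M)
      \<le> (\<integral>\<^sup>+x. ennreal K * indicator (space M - G) x + ennreal (q * K) * indicator G x \<partial>M)"
    using sets.sets_into_space[OF G]
    by (intro nn_integral_mono) (auto simp: f_le f_le_on_G split: split_indicator)
  also have "\<dots> = ennreal K * emeasure M (space M - G) + ennreal (q * K) * emeasure M G"
    using G by (subst nn_integral_add) (auto simp: nn_integral_cmult_indicator)
  also have "\<dots> = ennreal (K * (1 - prob G) + q * K * prob G)"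
    using G q K by (simp add: emeasure_eq_measure prob_compl ennreal_mult[symmetric]
        ennreal_plus[symmetric] del: ennreal_plus)
  also have "\<dots> \<le> ennreal ((1 - p * (1 - q)) * K)"
  proof (intro ennreal_leI)
    have "p * ((1 - q) * K) \<le> prob G * ((1 - q) * K)"
      using p q K by (intro mult_right_mono) auto
    then show "K * (1 - prob G) + q * K * prob G \<le> (1 - p * (1 - q)) * K"
      by (simp add: algebra_simps)
  qed
  finally show ?thesis .
qed

section \<open>Subset sums and the stopping time\<close>

lemma hit_time_le_enat_iff:
  assumes mono: "\<And>s t. s \<le> t \<Longrightarrow> P s \<Longrightarrow> P t"
  shows "hit_time P \<le> enat t \<longleftrightarrow> P t"
proof
  assume "hit_time P \<le> enat t"
  then have ex: "\<exists>s. P s" and "(LEAST s. P s) \<le> t"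
    unfolding hit_time_def by (auto split: if_splits)
  moreover have "P (LEAST s. P s)" using ex by (rule LeastI_ex)
  ultimately show "P t" using mono by blast
qed (auto simp: hit_time_def intro: Least_le)

definition covered :: "real \<Rightarrow> (nat \<Rightarrow> real) \<Rightarrow> nat \<Rightarrow> real set" where
  "covered eps x t = {z. \<exists>S\<subseteq>{1..t}. \<bar>z - (\<Sum>i\<in>S. x i)\<bar> < eps}"

definition covered_measure :: "real \<Rightarrow> (nat \<Rightarrow> real) \<Rightarrow> nat \<Rightarrow> real" where
  "covered_measure eps x t = measure lborel (covered eps x t \<inter> {-1<..<1})"

lemma covered_eq_UN: "covered eps x t = (\<Union>S\<in>Pow {1..t}. ball (\<Sum>i\<in>S. x i) eps)"
  by (auto simp: covered_def dist_real_def abs_minus_commute)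

lemma sets_covered [measurable]: "covered eps x t \<in> sets borel"
  unfolding covered_eq_UN by (intro borel_open) auto

lemma fmeasurable_covered_Int: "covered eps x t \<inter> {-1<..<1} \<in> fmeasurable lborel"
  by (intro fmeasurable_subset_Icc[of _ "-1" 1]) auto

lemma covered_mono:
  assumes "s \<le> t"
  shows "covered eps x s \<subseteq> covered eps x t"
proof -
  have "{1..s} \<subseteq> {1..t}" using assms by auto
  then show ?thesis unfolding covered_def by blast
qed

lemma Ioo_subset_covered: "{-eps<..<eps} \<subseteq> covered eps x t"
  unfolding covered_def by (auto intro!: exI[of _ "{}"])

lemma covered_cong: "(\<And>i. i \<in> {1..t} \<Longrightarrow> x i = y i) \<Longrightarrow> covered eps x t = covered eps y t"
  unfolding covered_def
  by (intro Collect_cong ex_cong1) (metis (no_types, lifting) subset_iff sum.cong)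

lemma covered_Suc:
  assumes "z - x (Suc t) \<in> covered eps x t"
  shows "z \<in> covered eps x (Suc t)"
proof -
  obtain S where S: "S \<subseteq> {1..t}" "\<bar>z - x (Suc t) - (\<Sum>i\<in>S. x i)\<bar> < eps"
    using assms unfolding covered_def by auto
  then have "(\<Sum>i\<in>insert (Suc t) S. x i) = x (Suc t) + (\<Sum>i\<in>S. x i)"
    using finite_subset[OF S(1)] by (subst sum.insert) auto
  with S show ?thesis
    unfolding covered_def by (intro CollectI exI[of _ "insert (Suc t) S"]) (auto simp: algebra_simps)
qed

lemma covered_measure_nonneg: "0 \<le> covered_measure eps x t"
  unfolding covered_measure_def by simp

lemma covered_measure_mono: "s \<le> t \<Longrightarrow> covered_measure eps x s \<le> covered_measure eps x t"
  unfolding covered_measure_def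
  by (intro measure_mono_fmeasurable fmeasurable_covered_Int) (use covered_mono[of s t eps x] in auto)

lemma covered_measure_ge:
  assumes "eps \<le> 1"
  shows "2 * eps \<le> covered_measure eps x t"
proof -
  have "measure lborel {-eps<..<eps} \<le> covered_measure eps x t"
    unfolding covered_measure_def using Ioo_subset_covered[of eps x t] assms
    by (intro measure_mono_fmeasurable fmeasurable_covered_Int) auto
  then show ?thesis by (cases "0 \<le> eps") auto
qed

lemma v_t_eq_covered_measure: "v_t eps X t \<omega> = covered_measure eps (\<lambda>i. X i \<omega>) t / 2"
proof -
  have f: "f_t eps X t \<omega> = indicator (covered eps (\<lambda>i. X i \<omega>) t)"
    by (auto simp: f_t_def approx_t_def covered_def fun_eq_iff split: split_indicator)
  have m1: "- (1::ereal) = ereal (-1)" by (simp add: one_ereal_def)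
  have "einterval (-1) 1 = {-1<..<(1::real)}"
    by (auto simp: einterval_def m1)
  then have "(LBINT z=-1..1. f_t eps X t \<omega> z)
      = (LINT z|lborel. indicator {-1<..<1} z *\<^sub>R indicator (covered eps (\<lambda>i. X i \<omega>) t) z)"
    unfolding interval_lebesgue_integral_def set_lebesgue_integral_def f by (simp add: m1)
  also have "\<dots> = (LINT z|lborel. indicator (covered eps (\<lambda>i. X i \<omega>) t \<inter> {-1<..<1}) z)"
    by (intro Bochner_Integration.integral_cong) (auto split: split_indicator)
  finally have "(LBINT z=-1..1. f_t eps X t \<omega> z) = covered_measure eps (\<lambda>i. X i \<omega>) t"
    unfolding covered_measure_def by simp
  then show ?thesis unfolding v_t_def by simp
qed

lemma tau_le_enat_iff:
  assumes "eps < 1"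
  shows "tau eps X \<omega> \<le> enat t \<longleftrightarrow> 2 - eps \<le> covered_measure eps (\<lambda>i. X i \<omega>) t"
proof -
  define v where "v s = covered_measure eps (\<lambda>i. X i \<omega>) s / 2" for s
  have v_mono: "s \<le> t \<Longrightarrow> v s \<le> v t" for s t
    unfolding v_def by (intro divide_right_mono covered_measure_mono) auto
  have v: "v_t eps X s \<omega> = v s" for s
    unfolding v_def v_t_eq_covered_measure ..
  define P where "P t \<longleftrightarrow> 1 - v t \<le> eps / 2" for t
  have P_mono: "s \<le> t \<Longrightarrow> P s \<Longrightarrow> P t" for s t
    unfolding P_def using v_mono[of s t] by simp
  have tau1_iff: "tau1 eps X \<omega> \<le> enat t \<longleftrightarrow> 1/2 < v t" for t
    unfolding tau1_def v by (intro hit_time_le_enat_iff) (meson v_mono less_le_trans)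
  have tau: "tau eps X \<omega> = enat t1 + hit_time (\<lambda>s. P (t1 + s))"
    if "tau1 eps X \<omega> = enat t1" for t1
    unfolding tau_def that P_def v by simp
  have hit_shifted_iff: "hit_time (\<lambda>s. P (t1 + s)) \<le> enat s \<longleftrightarrow> P (t1 + s)" for t1 s
    by (rule hit_time_le_enat_iff) (metis P_mono add_left_mono)
  have "tau eps X \<omega> \<le> enat t \<longleftrightarrow> P t"
  proof
    assume "P t"
    then have "tau1 eps X \<omega> \<le> enat t" unfolding tau1_iff using assms by (simp add: P_def)
    then obtain t1 where t1: "tau1 eps X \<omega> = enat t1" "t1 \<le> t"
      by (cases "tau1 eps X \<omega>") auto
    have "hit_time (\<lambda>s. P (t1 + s)) \<le> enat (t - t1)"
      using \<open>P t\<close> t1 by (simp add: hit_shifted_iff)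
    then show "tau eps X \<omega> \<le> enat t"
      using t1 unfolding tau[OF t1(1)] by (cases "hit_time (\<lambda>s. P (t1 + s))") auto
  next
    assume le: "tau eps X \<omega> \<le> enat t"
    then obtain t1 where t1: "tau1 eps X \<omega> = enat t1"
      unfolding tau_def by (cases "tau1 eps X \<omega>") auto
    with le obtain s where s: "hit_time (\<lambda>s. P (t1 + s)) \<le> enat s" "t1 + s \<le> t"
      unfolding tau[OF t1] by (cases "hit_time (\<lambda>s. P (t1 + s))") auto
    then have "P (t1 + s)" by (simp add: hit_shifted_iff)
    then show "P t" by (rule P_mono[OF s(2)])
  qed
  then show ?thesis unfolding P_def v_def by auto
qed

section \<open>Overlap of a set with its translates\<close>

definition overlap :: "real set \<Rightarrow> real set \<Rightarrow> real \<Rightarrow> ennreal" where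
  "overlap S T y = emeasure lborel {z \<in> T. z - y \<in> S}"

lemma overlap_eq_nn_integral:
  fixes S T :: "real set"
  assumes [measurable]: "S \<in> sets borel" "T \<in> sets borel"
  shows "overlap S T y = (\<integral>\<^sup>+z. indicator T z * indicator S (z - y) \<partial>lborel)"
proof -
  have "(\<integral>\<^sup>+z. indicator T z * indicator S (z - y) \<partial>lborel)
      = (\<integral>\<^sup>+z. indicator {z \<in> T. z - y \<in> S} z \<partial>lborel)"
    by (intro nn_integral_cong) (auto split: split_indicator)
  also have "\<dots> = overlap S T y" unfolding overlap_def by (intro nn_integral_indicator) measurable
  finally show ?thesis by simp
qed

lemma borel_measurable_overlap [measurable]:
  fixes S T :: "real set"
  assumes [measurable]: "S \<in> sets borel" "T \<in> sets borel"
  shows "overlap S T \<in> borel_measurable borel"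
  unfolding overlap_eq_nn_integral[OF assms, abs_def] by measurable

lemma overlap_le_min:
  fixes S T :: "real set"
  assumes [measurable]: "S \<in> sets borel" "T \<in> sets borel"
  shows "overlap S T y \<le> min (emeasure lborel S) (emeasure lborel T)"
proof -
  have "overlap S T y \<le> emeasure lborel {z. z - y \<in> S}"
    unfolding overlap_def by (intro emeasure_mono) auto
  moreover have "overlap S T y \<le> emeasure lborel T"
    unfolding overlap_def by (intro emeasure_mono) auto
  ultimately show ?thesis by (simp add: emeasure_lborel_translate)
qed

lemma emeasure_Int_Icc_eq_nn_integral:
  fixes S :: "real set"
  assumes [measurable]: "S \<in> sets borel"
  shows "emeasure lborel (S \<inter> {z-1..z+1}) = (\<integral>\<^sup>+w. indicator S w * indicator {-1..1} (w - z) \<partial>lborel)"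
proof -
  have "emeasure lborel (S \<inter> {z-1..z+1}) = (\<integral>\<^sup>+w. indicator (S \<inter> {z-1..z+1}) w \<partial>lborel)"
    by simp
  also have "\<dots> = (\<integral>\<^sup>+w. indicator S w * indicator {-1..1} (w - z) \<partial>lborel)"
    by (intro nn_integral_cong) (auto split: split_indicator)
  finally show ?thesis .
qed

lemma nn_integral_overlap:
  fixes S T :: "real set"
  assumes [measurable]: "S \<in> sets borel" "T \<in> sets borel"
  shows "(\<integral>\<^sup>+y. indicator {-1..1} y * overlap S T y \<partial>lborel)
       = (\<integral>\<^sup>+z. indicator T z * emeasure lborel (S \<inter> {z-1..z+1}) \<partial>lborel)"
proof -
  have "(\<integral>\<^sup>+y. indicator {-1..1} y * overlap S T y \<partial>lborel)
     = (\<integral>\<^sup>+y. (\<integral>\<^sup>+z. indicator {-1..1} y * (indicator T z * indicator S (z - y)) \<partial>lborel) \<partial>lborel)"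
    by (intro nn_integral_cong) (simp add: overlap_eq_nn_integral nn_integral_cmult)
  also have "\<dots> = (\<integral>\<^sup>+z. (\<integral>\<^sup>+y. indicator {-1..1} y * (indicator T z * indicator S (z - y)) \<partial>lborel) \<partial>lborel)"
    by (intro lborel_pair.Fubini') measurable
  also have "\<dots> = (\<integral>\<^sup>+z. indicator T z * (\<integral>\<^sup>+y. indicator {-1..1} y * indicator S (z - y) \<partial>lborel) \<partial>lborel)"
    by (intro nn_integral_cong) (simp add: nn_integral_cmult[symmetric] ac_simps)
  also have "\<dots> = (\<integral>\<^sup>+z. indicator T z * emeasure lborel (S \<inter> {z-1..z+1}) \<partial>lborel)"
  proof (intro nn_integral_cong)
    fix z :: real
    have "(\<integral>\<^sup>+y. indicator {-1..1} y * indicator S (z - y) \<partial>lborel)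
        = ennreal \<bar>-1\<bar> * (\<integral>\<^sup>+w. indicator {-1..1} (z + (-1) * w) * indicator S (z - (z + (-1) * w)) \<partial>lborel)"
      by (rule nn_integral_real_affine) auto
    also have "\<dots> = (\<integral>\<^sup>+w. indicator S w * indicator {-1..1} (w - z) \<partial>lborel)"
      unfolding abs_minus_cancel abs_one ennreal_1 mult_1
      by (intro nn_integral_cong) (auto split: split_indicator)
    also have "\<dots> = emeasure lborel (S \<inter> {z-1..z+1})"
      by (simp add: emeasure_Int_Icc_eq_nn_integral)
    finally show "indicator T z * (\<integral>\<^sup>+y. indicator {-1..1} y * indicator S (z - y) \<partial>lborel)
        = indicator T z * emeasure lborel (S \<inter> {z-1..z+1})" by simp
  qed
  finally show ?thesis .
qed

lemma nn_integral_window_measure_swap: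
  fixes S T :: "real set"
  assumes [measurable]: "S \<in> sets borel" "T \<in> sets borel"
  shows "(\<integral>\<^sup>+z. indicator T z * emeasure lborel (S \<inter> {z-1..z+1}) \<partial>lborel)
       = (\<integral>\<^sup>+w. indicator S w * emeasure lborel (T \<inter> {w-1..w+1}) \<partial>lborel)"
proof -
  have "(\<integral>\<^sup>+z. indicator T z * emeasure lborel (S \<inter> {z-1..z+1}) \<partial>lborel)
     = (\<integral>\<^sup>+z. (\<integral>\<^sup>+w. indicator T z * (indicator S w * indicator {-1..1} (w - z)) \<partial>lborel) \<partial>lborel)"
    by (intro nn_integral_cong) (simp add: emeasure_Int_Icc_eq_nn_integral nn_integral_cmult)
  also have "\<dots> = (\<integral>\<^sup>+w. (\<integral>\<^sup>+z. indicator T z * (indicator S w * indicator {-1..1} (w - z)) \<partial>lborel) \<partial>lborel)"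
    by (intro lborel_pair.Fubini'[symmetric]) measurable
  also have "\<dots> = (\<integral>\<^sup>+w. (\<integral>\<^sup>+z. indicator S w * (indicator T z * indicator {-1..1} (z - w)) \<partial>lborel) \<partial>lborel)"
    by (intro nn_integral_cong) (auto simp: ac_simps split: split_indicator)
  also have "\<dots> = (\<integral>\<^sup>+w. indicator S w * emeasure lborel (T \<inter> {w-1..w+1}) \<partial>lborel)"
    by (intro nn_integral_cong) (simp add: emeasure_Int_Icc_eq_nn_integral nn_integral_cmult)
  finally show ?thesis .
qed

lemma measure_complement_window_ge:
  fixes S :: "real set"
  assumes [measurable]: "S \<in> sets borel" and S: "S \<subseteq> {-1<..<1}" and z: "\<bar>z\<bar> < 1"
  shows "2 - measure lborel S - \<bar>z\<bar> \<le> measure lborel (({-1<..<1} - S) \<inter> {z-1..z+1})"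
proof -
  have "measure lborel ({-1<..<1} - {z-1..z+1}) \<le> \<bar>z\<bar>"
  proof (cases "0 \<le> z")
    case True
    have "measure lborel ({-1<..<1} - {z-1..z+1}) \<le> measure lborel {-1..z-1}"
      using True fmeasurable_cbox[of "-1" "z-1"] by (intro measure_mono_fmeasurable) auto
    then show ?thesis using True z by simp
  next
    case False
    have "measure lborel ({-1<..<1} - {z-1..z+1}) \<le> measure lborel {z+1..1}"
      using False fmeasurable_cbox[of "z+1" "1"] by (intro measure_mono_fmeasurable) auto
    then show ?thesis using False z by simp
  qed
  moreover have "measure lborel ({-1<..<1} - S)
      \<le> measure lborel (({-1<..<1} - S) \<inter> {z-1..z+1}) + measure lborel ({-1<..<1} - {z-1..z+1})"
    by (intro measure_le_Un_of_subset_Icc[of _ _ _ "-1" 1]) auto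
  ultimately show ?thesis using measure_Ioo_Diff[OF _ S] by simp
qed

lemma emeasure_complement_window_ge:
  fixes S :: "real set"
  assumes [measurable]: "S \<in> sets borel" and S: "S \<subseteq> {-1<..<1}" and z: "z \<in> S"
    and a: "measure lborel S = a"
  shows "ennreal (1 - a + a/4 * indicator {-(1 - a/4)..1 - a/4} z)
    \<le> emeasure lborel (({-1<..<1} - S) \<inter> {z-1..z+1})"
proof -
  have "\<bar>z\<bar> < 1" using z S by (auto simp: abs_less_iff)
  then have "1 - a + a/4 * indicator {-(1 - a/4)..1 - a/4} z \<le> measure lborel (({-1<..<1} - S) \<inter> {z-1..z+1})"
    using measure_complement_window_ge[OF _ S] a by (fastforce split: split_indicator)
  then show ?thesis
    by (subst emeasure_eq_measure_subset_Icc[of _ "-1" 1]) (auto intro: ennreal_leI)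
qed

lemma measure_Int_inner_interval_ge:
  fixes S :: "real set"
  assumes [measurable]: "S \<in> sets borel" and S: "S \<subseteq> {-1<..<1}" and a: "measure lborel S = a"
  shows "a / 2 \<le> measure lborel (S \<inter> {-(1 - a/4)..1 - a/4})"
proof -
  have a_bounds: "0 \<le> a" "a \<le> 2"
    using a measure_Ioo_Diff[OF _ S] measure_nonneg[of lborel "{-1<..<1} - S"] by auto
  have "a \<le> measure lborel (S \<inter> {-(1 - a/4)..1 - a/4}) + measure lborel ({-1..-(1-a/4)} \<union> {1-a/4..1})"
    unfolding a[symmetric] using S a a_bounds by (intro measure_le_Un_of_subset_Icc[of _ _ _ "-1" 1]) auto
  moreover have "measure lborel ({-1..-(1-a/4)} \<union> {1-a/4..1::real})
      \<le> measure lborel {-1..-(1-a/4)} + measure lborel {1-a/4..1::real}"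
    by (intro measure_Un_le) auto
  ultimately show ?thesis using a_bounds by simp
qed

text \<open>The pointwise bound 2 - |S| - |z| is at least 1 - |S| on S, and at least 1 - 3|S|/4 on
  the half of S inside [-(1 - |S|/4), 1 - |S|/4]; integrating gives (1 - |S|) |S| + |S|^2/8 \<ge> |S|/8.\<close>

lemma nn_integral_complement_window_ge:
  fixes S :: "real set"
  assumes [measurable]: "S \<in> sets borel" and S: "S \<subseteq> {-1<..<1}" and a1: "measure lborel S \<le> 1"
  shows "ennreal (measure lborel S / 8)
     \<le> (\<integral>\<^sup>+z. indicator S z * emeasure lborel (({-1<..<1} - S) \<inter> {z-1..z+1}) \<partial>lborel)"
proof -
  define a where "a = measure lborel S"
  define T where "T = {-1<..<1} - S"
  define C where "C = {-(1 - a/4)..1 - a/4}"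
  have a0: "0 \<le> a" unfolding a_def by simp
  have [measurable]: "T \<in> sets borel" "C \<in> sets borel" unfolding T_def C_def by auto
  have "ennreal (1-a) * indicator S z + ennreal (a/4) * indicator (S \<inter> C) z
      \<le> indicator S z * emeasure lborel (T \<inter> {z-1..z+1})" for z
  proof (cases "z \<in> S")
    case True
    then have "ennreal (1-a) * indicator S z + ennreal (a/4) * indicator (S \<inter> C) z
        = ennreal (1 - a + a/4 * indicator C z)"
      using a0 a1 unfolding a_def[symmetric]
      by (auto split: split_indicator simp: ennreal_plus[symmetric] simp del: ennreal_plus)
    with True show ?thesis
      using emeasure_complement_window_ge[OF _ S True a_def[symmetric]] unfolding C_def T_def by simp
  qed simp
  then have "ennreal (1-a) * emeasure lborel S + ennreal (a/4) * emeasure lborel (S \<inter> C)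
      \<le> (\<integral>\<^sup>+z. indicator S z * emeasure lborel (T \<inter> {z-1..z+1}) \<partial>lborel)"
    by (subst (1 2) nn_integral_cmult_indicator[symmetric], simp_all,
        subst nn_integral_add[symmetric]) (auto intro!: nn_integral_mono)
  moreover have "ennreal (a / 8)
      \<le> ennreal (1-a) * emeasure lborel S + ennreal (a/4) * emeasure lborel (S \<inter> C)"
  proof -
    have "(a/4) * (a/2) \<le> (a/4) * measure lborel (S \<inter> C)"
      using measure_Int_inner_interval_ge[OF _ S a_def[symmetric]] a0 unfolding C_def
      by (intro mult_left_mono) auto
    moreover have "a * a \<le> a" using a1 a0 unfolding a_def by (intro mult_left_le) auto
    ultimately have "a / 8 \<le> (1-a) * a + (a/4) * measure lborel (S \<inter> C)"
      by (simp add: algebra_simps)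
    moreover have "emeasure lborel S = ennreal a"
      and "emeasure lborel (S \<inter> C) = ennreal (measure lborel (S \<inter> C))"
      using S unfolding a_def C_def by (auto intro!: emeasure_eq_measure_subset_Icc[of _ "-1" 1])
    ultimately show ?thesis
      using a0 a1 unfolding a_def[symmetric]
      by (simp add: ennreal_mult[symmetric] ennreal_plus[symmetric] del: ennreal_plus)
  qed
  ultimately show ?thesis unfolding a_def T_def by (rule order.trans[rotated])
qed

lemma nn_integral_overlap_ge:
  fixes B :: "real set"
  assumes [measurable]: "B \<in> sets borel" and B: "B \<subseteq> {-1<..<1}"
  shows "ennreal (min (measure lborel B) (2 - measure lborel B) / 8)
     \<le> (\<integral>\<^sup>+y. indicator {-1..1} y * overlap B ({-1<..<1} - B) y \<partial>lborel)"
proof -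
  define U where "U = {-1<..<1} - B"
  have [measurable]: "U \<in> sets borel" and U: "U \<subseteq> {-1<..<1}" "{-1<..<1} - U = B"
    using B unfolding U_def by auto
  have measure_U: "measure lborel U = 2 - measure lborel B"
    unfolding U_def using B by (rule measure_Ioo_Diff[rotated]) simp
  let ?I_U = "\<integral>\<^sup>+z. indicator U z * emeasure lborel (B \<inter> {z-1..z+1}) \<partial>lborel"
  let ?I_B = "\<integral>\<^sup>+w. indicator B w * emeasure lborel (U \<inter> {w-1..w+1}) \<partial>lborel"
  have "(\<integral>\<^sup>+y. indicator {-1..1} y * overlap B U y \<partial>lborel) = ?I_U"
    by (rule nn_integral_overlap) auto
  moreover have "?I_U = ?I_B"
    by (rule nn_integral_window_measure_swap) auto
  moreover have "ennreal (min (measure lborel B) (measure lborel U) / 8) \<le> ?I_B"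
  proof (cases "measure lborel B \<le> 1")
    case True
    then have "ennreal (measure lborel B / 8) \<le> ?I_B"
      unfolding U_def using B by (intro nn_integral_complement_window_ge) auto
    then show ?thesis by (rule order.trans[rotated]) (auto intro!: ennreal_leI)
  next
    case False
    then have "ennreal (measure lborel U / 8) \<le> ?I_U"
      using nn_integral_complement_window_ge[of U] U measure_U by auto
    then show ?thesis unfolding \<open>?I_U = ?I_B\<close>
      by (rule order.trans[rotated]) (auto intro!: ennreal_leI)
  qed
  ultimately have "ennreal (min (measure lborel B) (measure lborel U) / 8)
      \<le> (\<integral>\<^sup>+y. indicator {-1..1} y * overlap B U y \<partial>lborel)"
    by simp
  then show ?thesis unfolding measure_U by (simp add: U_def)
qed

lemma measure_large_overlap_ge:
  fixes B :: "real set"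
  assumes [measurable]: "B \<in> sets borel" and B: "B \<subseteq> {-1<..<1}"
  defines "m \<equiv> min (measure lborel B) (2 - measure lborel B)"
  shows "1/16 \<le> measure lborel ({y. ennreal (m / 32) \<le> overlap B ({-1<..<1} - B) y} \<inter> {-1..1})"
proof -
  define U where "U = {-1<..<1} - B"
  have [measurable]: "U \<in> sets borel" unfolding U_def by simp
  have m0: "0 \<le> m"
    unfolding m_def U_def using measure_Ioo_Diff[OF _ B] measure_nonneg[of lborel "{-1<..<1} - B"] by simp
  have measure_U: "measure lborel U = 2 - measure lborel B"
    unfolding U_def using B by (rule measure_Ioo_Diff[rotated]) simp
  have "emeasure lborel B = ennreal (measure lborel B)" "emeasure lborel U = ennreal (measure lborel U)"
    using B unfolding U_def by (auto intro!: emeasure_eq_measure_subset_Icc[of _ "-1" 1])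
  then have "overlap B U y \<le> ennreal m" for y
    using overlap_le_min[of B U y] m0 unfolding m_def measure_U by (simp add: min_ennreal)
  moreover have "ennreal (m / 8) \<le> (\<integral>\<^sup>+y. indicator {-1..1} y * overlap B U y \<partial>lborel)"
    unfolding m_def U_def using B by (intro nn_integral_overlap_ge) auto
  ultimately have "m / 8 \<le> m * measure lborel ({y. ennreal (m / 32) \<le> overlap B U y} \<inter> {-1..1}) + m / 32 * 2"
    using m0 measure_level_set_ge[of "overlap B U" "{-1..1}" m "m / 32" "m / 8"]
      fmeasurable_subset_Icc[of "{-1..1}" "-1" 1] by simp
  moreover have "{y. ennreal (m / 32) \<le> overlap B U y} = UNIV" if "m = 0"
    using that by simp
  ultimately show ?thesis
    unfolding U_def using m0 by (cases "m = 0") (auto simp: field_simps)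
qed

lemma covered_measure_Suc_ge:
  fixes eps y :: real and x :: "nat \<Rightarrow> real" and t :: nat
  defines "B \<equiv> covered eps x t \<inter> {-1<..<1}"
  shows "ennreal (covered_measure eps x t) + overlap B ({-1<..<1} - B) y
    \<le> ennreal (covered_measure eps (x(Suc t := y)) (Suc t))"
proof -
  define N where "N = covered eps (x(Suc t := y)) (Suc t) \<inter> {-1<..<1}"
  define W where "W = {z \<in> {-1<..<1} - B. z - y \<in> B}"
  have [measurable]: "B \<in> sets borel" "W \<in> sets borel" unfolding B_def W_def by measurable
  have covered_t: "covered eps (x(Suc t := y)) t = covered eps x t" by (intro covered_cong) auto
  have "B \<subseteq> N"
    unfolding B_def N_def using covered_mono[of t "Suc t" eps "x(Suc t := y)"] covered_t by auto
  moreover have "W \<subseteq> N"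
    unfolding W_def B_def N_def using covered_Suc[of _ "x(Suc t := y)" t eps] covered_t by auto
  moreover have "B \<inter> W = {}" unfolding W_def by auto
  ultimately have "emeasure lborel B + emeasure lborel W \<le> emeasure lborel N"
    unfolding N_def by (subst plus_emeasure) (auto intro!: emeasure_mono)
  moreover have "emeasure lborel B = ennreal (covered_measure eps x t)"
    unfolding B_def covered_measure_def by (rule emeasure_eq_measure_subset_Icc[of _ "-1" 1]) auto
  moreover have "emeasure lborel N = ennreal (covered_measure eps (x(Suc t := y)) (Suc t))"
    unfolding N_def covered_measure_def by (rule emeasure_eq_measure_subset_Icc[of _ "-1" 1]) auto
  ultimately show ?thesis unfolding overlap_def W_def by simp
qed

lemma covered_measure_Suc_mono:
  "covered_measure eps x t \<le> covered_measure eps (x(Suc t := y)) (Suc t)"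
proof -
  have "ennreal (covered_measure eps x t) \<le> ennreal (covered_measure eps (x(Suc t := y)) (Suc t))"
    using covered_measure_Suc_ge[of eps x t y] by (rule order.trans[rotated]) (intro add_increasing2, auto)
  then show ?thesis by (simp add: covered_measure_nonneg)
qed

section \<open>The potential\<close>

text \<open>The constants make a step from b to at least b + min(b, 2 - b)/32 raise the growth index
  by 1: 33 ln(33/32) \<ge> 1 and -32 ln(31/32) \<ge> 1.\<close>

definition growth_index :: "real \<Rightarrow> real" where
  "growth_index b = (if b < 1 then 33 * ln b else 1 - 32 * ln (2 - b))"

definition potential :: "real \<Rightarrow> real \<Rightarrow> real" where
  "potential eps b = (if 2 - eps \<le> b then 0 else exp (- growth_index b))"

lemma growth_index_mono:
  assumes "0 < b" "b \<le> b'" "b' < 2"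
  shows "growth_index b \<le> growth_index b'"
proof (cases "b' < 1")
  case True
  then show ?thesis using assms unfolding growth_index_def by simp
next
  case b': False
  show ?thesis
  proof (cases "b < 1")
    case True
    then have "ln b < 0" "ln (2 - b') \<le> 0" using assms b' by auto
    then show ?thesis using True b' unfolding growth_index_def by simp
  next
    case False
    then have "ln (2 - b') \<le> ln (2 - b)" using assms by simp
    then show ?thesis using False b' unfolding growth_index_def by simp
  qed
qed

lemma growth_index_step:
  assumes "0 < b" "b + min b (2 - b) / 32 \<le> b'" "b' < 2"
  shows "growth_index b + 1 \<le> growth_index b'"
proof (cases "b < 1")
  case b: True
  show ?thesis
  proof (cases "b' < 1")
    case True
    have "1/33 \<le> ln (33/32 :: real)"
      using ln_le_minus_one[of "32/33::real"] by (simp add: ln_div)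
    moreover have "ln (33/32 * b) \<le> ln b'" using assms b by (subst ln_le_cancel_iff) auto
    moreover have "ln (33/32 * b) = ln (33/32) + ln b" using assms by (subst ln_mult) auto
    ultimately show ?thesis using True b unfolding growth_index_def by simp
  next
    case False
    then have "ln (2 - b') \<le> 0" using assms by simp
    moreover have "ln b < 0" using assms b by simp
    ultimately show ?thesis using False b unfolding growth_index_def by simp
  qed
next
  case False
  then have "min b (2 - b) = 2 - b" by simp
  then have "b < 2" "1 \<le> b'" "2 - b' \<le> 31/32 * (2 - b)"
    using assms False by (simp_all add: field_simps)
  have "ln (31/32 :: real) \<le> -1/32"
    using ln_le_minus_one[of "31/32::real"] by simp
  moreover have "ln (2 - b') \<le> ln (31/32 * (2 - b))"
    using \<open>b < 2\<close> \<open>2 - b' \<le> _\<close> assms by (subst ln_le_cancel_iff) auto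
  moreover have "ln (31/32 * (2 - b)) = ln (31/32) + ln (2 - b)" using \<open>b < 2\<close> by (subst ln_mult) auto
  ultimately show ?thesis using False \<open>1 \<le> b'\<close> unfolding growth_index_def by simp
qed

lemma potential_nonneg: "0 \<le> potential eps b"
  unfolding potential_def by simp

lemma potential_antimono:
  assumes "0 < b" "b \<le> b'" "0 \<le> eps"
  shows "potential eps b' \<le> potential eps b"
  using growth_index_mono[of b b'] assms unfolding potential_def by auto

lemma potential_step:
  assumes "0 < b" "b < 2 - eps" "b + min b (2 - b) / 32 \<le> b'" "0 \<le> eps"
  shows "potential eps b' \<le> exp (-1) * potential eps b"
proof (cases "2 - eps \<le> b'")
  case False
  then have "growth_index b + 1 \<le> growth_index b'"
    using assms by (intro growth_index_step) auto
  then have "exp (- growth_index b') \<le> exp (-1) * exp (- growth_index b)"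
    by (simp flip: exp_add)
  then show ?thesis using False assms unfolding potential_def by auto
qed (simp add: potential_def)

lemma potential_le:
  assumes "0 < eps" "2 * eps \<le> b"
  shows "potential eps b \<le> exp (- 33 * ln eps)"
proof (cases "2 - eps \<le> b")
  case False
  have "33 * ln eps \<le> growth_index b"
  proof (cases "b < 1")
    case True
    then show ?thesis using assms unfolding growth_index_def by simp
  next
    case b: False
    then have "ln (2 - b) \<le> 0" "ln eps < 0" using False assms by auto
    then show ?thesis using b unfolding growth_index_def by simp
  qed
  then show ?thesis using False unfolding potential_def by simp
qed (simp add: potential_def)

lemma potential_ge:
  assumes "0 < eps" "eps < 1" "0 < b" "b < 2 - eps"
  shows "1 \<le> exp (1 - 32 * ln eps) * potential eps b"
proof -
  have "growth_index b \<le> 1 - 32 * ln eps"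
  proof (cases "b < 1")
    case True
    then have "ln b < 0" "ln eps < 0" using assms by auto
    then show ?thesis using True unfolding growth_index_def by simp
  next
    case False
    then have "ln eps \<le> ln (2 - b)" using assms by simp
    then show ?thesis using False unfolding growth_index_def by simp
  qed
  then show ?thesis using assms unfolding potential_def by (simp flip: exp_add)
qed

section \<open>Independent uniform steps\<close>

definition unif :: "real measure" where
  "unif = uniform_measure lborel {-1..1}"

lemma prob_space_unif: "prob_space unif"
  unfolding unif_def by (intro prob_space_uniform_measure) auto

lemma sets_unif [measurable_cong, simp]: "sets unif = sets borel"
  and space_unif [simp]: "space unif = UNIV"
  unfolding unif_def by auto

lemma measure_unif: "A \<in> sets borel \<Longrightarrow> measure unif A = measure lborel (A \<inter> {-1..1}) / 2"
  unfolding unif_def by (subst measure_uniform_measure) (auto simp: Int_commute)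

lemma nn_integral_potential_Suc_le:
  assumes eps: "0 < eps" "eps < 1"
  shows "(\<integral>\<^sup>+y. ennreal (potential eps (covered_measure eps (x(Suc t := y)) (Suc t))) \<partial>unif)
    \<le> ennreal (63/64) * ennreal (potential eps (covered_measure eps x t))"
proof (cases "2 - eps \<le> covered_measure eps x t")
  case True
  then have "potential eps (covered_measure eps (x(Suc t := y)) (Suc t)) = 0" for y
    using covered_measure_Suc_mono[of eps x t y] unfolding potential_def by simp
  then show ?thesis by simp
next
  case False
  define b where "b = covered_measure eps x t"
  define B where "B = covered eps x t \<inter> {-1<..<1}"
  define G where "G = {y. ennreal (min b (2 - b) / 32) \<le> overlap B ({-1<..<1} - B) y}"
  have [measurable]: "B \<in> sets borel" "G \<in> sets borel" unfolding B_def G_def by measurable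
  have b: "0 < b" "b < 2 - eps"
    using False covered_measure_ge[of eps x t] eps unfolding b_def by auto
  interpret unif: prob_space unif by (rule prob_space_unif)
  have "measure unif G = measure lborel (G \<inter> {-1..1}) / 2"
    by (rule measure_unif) simp
  then have prob_G: "1/32 \<le> measure unif G"
    using measure_large_overlap_ge[of B] unfolding G_def b_def covered_measure_def B_def by auto
  have "potential eps (covered_measure eps (x(Suc t := y)) (Suc t)) \<le> exp (-1) * potential eps b"
    if "y \<in> G" for y
  proof -
    have "ennreal (b + min b (2 - b) / 32) = ennreal b + ennreal (min b (2 - b) / 32)"
      using b eps by (intro ennreal_plus) auto
    also have "\<dots> \<le> ennreal b + overlap B ({-1<..<1} - B) y"
      using that unfolding G_def by (auto intro: add_left_mono)
    also have "\<dots> \<le> ennreal (covered_measure eps (x(Suc t := y)) (Suc t))"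
      unfolding b_def B_def by (rule covered_measure_Suc_ge)
    finally have "b + min b (2 - b) / 32 \<le> covered_measure eps (x(Suc t := y)) (Suc t)"
      by (simp only: ennreal_le_iff[OF covered_measure_nonneg])
    then show ?thesis using b eps by (intro potential_step) auto
  qed
  moreover have "potential eps (covered_measure eps (x(Suc t := y)) (Suc t)) \<le> potential eps b" for y
    unfolding b_def using b eps covered_measure_Suc_mono[of eps x t y]
    by (intro potential_antimono) (auto simp: b_def)
  ultimately have "(\<integral>\<^sup>+y. ennreal (potential eps (covered_measure eps (x(Suc t := y)) (Suc t))) \<partial>unif)
      \<le> ennreal ((1 - 1/32 * (1 - exp (-1))) * potential eps b)"
    using prob_G potential_nonneg[of eps b]
    by (intro unif.nn_integral_le_contraction[of G]) (auto intro: ennreal_leI)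
  also have "\<dots> \<le> ennreal (63/64 * potential eps b)"
  proof (intro ennreal_leI mult_right_mono potential_nonneg)
    show "1 - 1/32 * (1 - exp (-1)) \<le> (63/64 :: real)"
      using exp_ge_add_one_self[of 1] by (simp add: exp_minus field_simps)
  qed
  also have "\<dots> = ennreal (63/64) * ennreal (potential eps b)" by (rule ennreal_mult') simp
  finally show ?thesis unfolding b_def .
qed

lemma borel_measurable_covered_measure:
  assumes "finite I" "{1..t} \<subseteq> I"
  shows "(\<lambda>x. covered_measure eps x t) \<in> borel_measurable (PiM I (\<lambda>_. unif))"
proof -
  let ?N = "PiM I (\<lambda>_. unif) \<Otimes>\<^sub>M (lborel :: real measure)"
  define Q where "Q = {p \<in> space ?N. snd p \<in> covered eps (fst p) t \<inter> {-1<..<1}}"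
  have coordinate: "(\<lambda>p. fst p i) \<in> borel_measurable ?N" if "i \<in> I" for i
  proof -
    have "(\<lambda>p. fst p i) \<in> measurable ?N unif" using that by measurable
    then show ?thesis by (subst measurable_cong_sets[of _ ?N _ unif]) auto
  qed
  have "Measurable.pred ?N (\<lambda>p. snd p \<in> {-1<..<1} \<and> (\<exists>S\<in>Pow {1..t}. \<bar>snd p - (\<Sum>i\<in>S. fst p i)\<bar> < eps))"
  proof (intro pred_intros_logic pred_intros_finite)
    show "Measurable.pred ?N (\<lambda>p. snd p \<in> {-1<..<1})" by measurable
    fix S assume "S \<in> Pow {1..t}"
    then have [measurable]: "(\<lambda>p. \<Sum>i\<in>S. fst p i) \<in> borel_measurable ?N"
      using assms by (intro borel_measurable_sum coordinate) auto
    show "Measurable.pred ?N (\<lambda>p. \<bar>snd p - (\<Sum>i\<in>S. fst p i)\<bar> < eps)" by measurable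
  qed simp
  then have "Q \<in> sets ?N"
    unfolding Q_def covered_def pred_def by (simp add: conj_commute Bex_def)
  then have "(\<lambda>x. enn2real (emeasure lborel (Pair x -` Q))) \<in> borel_measurable (PiM I (\<lambda>_. unif))"
    by (intro borel_measurable_enn2real lborel.measurable_emeasure_Pair)
  moreover have "Pair x -` Q = covered eps x t \<inter> {-1<..<1}" if "x \<in> space (PiM I (\<lambda>_. unif))" for x
    using that unfolding Q_def by (auto simp: space_pair_measure)
  ultimately show ?thesis
    unfolding covered_measure_def measure_def
    by (subst measurable_cong[where g = "\<lambda>x. enn2real (emeasure lborel (Pair x -` Q))"]) auto
qed

lemma borel_measurable_potential_covered_measure:
  assumes "finite I" "{1..t} \<subseteq> I"
  shows "(\<lambda>x. ennreal (potential eps (covered_measure eps x t))) \<in> borel_measurable (PiM I (\<lambda>_. unif))"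
proof -
  have [measurable]: "(\<lambda>x. covered_measure eps x t) \<in> borel_measurable (PiM I (\<lambda>_. unif))"
    using assms by (rule borel_measurable_covered_measure)
  show ?thesis unfolding potential_def growth_index_def by measurable
qed

lemma nn_integral_potential_le:
  assumes eps: "0 < eps" "eps < 1"
  shows "(\<integral>\<^sup>+x. ennreal (potential eps (covered_measure eps x t)) \<partial>PiM {1..t} (\<lambda>_. unif))
    \<le> ennreal (exp (- 33 * ln eps) * (63/64)^t)"
proof (induction t)
  case 0
  interpret prob_space "PiM {1..0::nat} (\<lambda>_. unif)" by (intro prob_space_PiM prob_space_unif)
  have "(\<integral>\<^sup>+x. ennreal (potential eps (covered_measure eps x 0)) \<partial>PiM {1..0} (\<lambda>_. unif))
      \<le> (\<integral>\<^sup>+x. ennreal (exp (- 33 * ln eps)) \<partial>PiM {1..0::nat} (\<lambda>_. unif))"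
    by (intro nn_integral_mono ennreal_leI potential_le) (use eps covered_measure_ge in auto)
  moreover have "emeasure (PiM {} (\<lambda>_::nat. unif)) (space (PiM {} (\<lambda>_::nat. unif))) = 1"
    using emeasure_space_1 by simp
  ultimately show ?case by simp
next
  case (Suc t)
  interpret product_sigma_finite "\<lambda>_::nat. unif"
    by (simp add: product_sigma_finite_def prob_space_imp_sigma_finite prob_space_unif)
  have insert: "{1..Suc t} = insert (Suc t) {1..t}" by auto
  have "(\<integral>\<^sup>+x. ennreal (potential eps (covered_measure eps x (Suc t))) \<partial>PiM {1..Suc t} (\<lambda>_. unif))
      = (\<integral>\<^sup>+x. (\<integral>\<^sup>+y. ennreal (potential eps (covered_measure eps (x(Suc t := y)) (Suc t))) \<partial>unif)
           \<partial>PiM {1..t} (\<lambda>_. unif))"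
    unfolding insert by (rule product_nn_integral_insert) (auto intro: borel_measurable_potential_covered_measure)
  also have "\<dots> \<le> (\<integral>\<^sup>+x. ennreal (63/64) * ennreal (potential eps (covered_measure eps x t)) \<partial>PiM {1..t} (\<lambda>_. unif))"
    using eps by (intro nn_integral_mono nn_integral_potential_Suc_le)
  also have "\<dots> = ennreal (63/64) * (\<integral>\<^sup>+x. ennreal (potential eps (covered_measure eps x t)) \<partial>PiM {1..t} (\<lambda>_. unif))"
    by (intro nn_integral_cmult borel_measurable_potential_covered_measure) auto
  also have "\<dots> \<le> ennreal (63/64) * ennreal (exp (- 33 * ln eps) * (63/64)^t)"
    by (intro mult_left_mono Suc.IH) auto
  also have "\<dots> = ennreal (exp (- 33 * ln eps) * (63/64)^Suc t)"
    by (simp add: ennreal_mult[symmetric] algebra_simps)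
  finally show ?case .
qed

lemma prob_uncovered_le:
  assumes eps: "0 < eps" "eps < 1"
  shows "measure (PiM {1..t} (\<lambda>_. unif)) {x \<in> space (PiM {1..t} (\<lambda>_. unif)). covered_measure eps x t < 2 - eps}
    \<le> exp (1 - 65 * ln eps) * (63/64)^t"
proof -
  let ?P = "PiM {1..t} (\<lambda>_. unif)"
  interpret prob_space ?P by (intro prob_space_PiM prob_space_unif)
  define c where "c = exp (1 - 32 * ln eps)"
  have measurable_potential:
    "(\<lambda>x. ennreal (potential eps (covered_measure eps x t))) \<in> borel_measurable ?P"
    by (rule borel_measurable_potential_covered_measure) auto
  then have measurable_integrand: "(\<lambda>x. ennreal (potential eps (covered_measure eps x t)) * indicator (space ?P) x)
      \<in> borel_measurable ?P"
    by (rule measurable_cong[THEN iffD1, rotated]) simp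
  have "{x \<in> space ?P. covered_measure eps x t < 2 - eps}
      \<subseteq> {x \<in> space ?P. 1 \<le> ennreal c * ennreal (potential eps (covered_measure eps x t))}"
  proof safe
    fix x assume "covered_measure eps x t < 2 - eps"
    then have "1 \<le> c * potential eps (covered_measure eps x t)"
      unfolding c_def using eps covered_measure_ge[of eps x t] by (intro potential_ge) auto
    then have "ennreal 1 \<le> ennreal (c * potential eps (covered_measure eps x t))" by (rule ennreal_leI)
    then show "1 \<le> ennreal c * ennreal (potential eps (covered_measure eps x t))"
      by (simp add: ennreal_mult' c_def)
  qed
  moreover have "{x \<in> space ?P. 1 \<le> ennreal c * ennreal (potential eps (covered_measure eps x t))} \<in> sets ?P"
    by (rule borel_measurable_le[OF borel_measurable_const
        borel_measurable_times_ennreal[OF borel_measurable_const measurable_potential]])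
  ultimately have "emeasure ?P {x \<in> space ?P. covered_measure eps x t < 2 - eps}
      \<le> emeasure ?P {x \<in> space ?P. 1 \<le> ennreal c * ennreal (potential eps (covered_measure eps x t))}"
    by (rule emeasure_mono)
  also have "\<dots> \<le> ennreal c * (\<integral>\<^sup>+x. ennreal (potential eps (covered_measure eps x t)) * indicator (space ?P) x \<partial>?P)"
    using measurable_integrand by (rule nn_integral_Markov_inequality) simp
  also have "\<dots> \<le> ennreal c * ennreal (exp (- 33 * ln eps) * (63/64)^t)"
  proof (intro mult_left_mono)
    have "(\<integral>\<^sup>+x. ennreal (potential eps (covered_measure eps x t)) * indicator (space ?P) x \<partial>?P)
        = (\<integral>\<^sup>+x. ennreal (potential eps (covered_measure eps x t)) \<partial>?P)"
      by (rule nn_integral_cong) simp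
    then show "(\<integral>\<^sup>+x. ennreal (potential eps (covered_measure eps x t)) * indicator (space ?P) x \<partial>?P)
        \<le> ennreal (exp (- 33 * ln eps) * (63/64)^t)"
      using nn_integral_potential_le[OF eps, of t] by simp
  qed simp
  also have "\<dots> = ennreal (exp (1 - 65 * ln eps) * (63/64)^t)"
    unfolding c_def by (simp add: ennreal_mult[symmetric] mult.assoc flip: exp_add)
  finally show ?thesis
    unfolding emeasure_eq_measure by (subst (asm) ennreal_le_iff) auto
qed

lemma distr_restrict_eq_PiM_unif:
  fixes X :: "nat \<Rightarrow> 'a \<Rightarrow> real" and t :: nat
  assumes "prob_space M" and "\<forall>i\<ge>1. X i \<in> borel_measurable M"
    and "prob_space.indep_vars M (\<lambda>_. borel) X {1..}"
    and "\<forall>i\<ge>1. distr M borel (X i) = uniform_measure lborel {-1..1}" and "1 \<le> t"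
  shows "distr M (PiM {1..t} (\<lambda>_. borel)) (\<lambda>\<omega>. \<lambda>i\<in>{1..t}. X i \<omega>) = PiM {1..t} (\<lambda>_. unif)"
proof -
  interpret prob_space M by fact
  have ne: "{1..t} \<noteq> {}" using assms(5) by auto
  have rv: "random_variable borel (X i)" if "i \<in> {1..t}" for i using assms(2) that by auto
  have "indep_vars (\<lambda>_. borel) X {1..t}"
    using assms(3) by (rule indep_vars_subset) auto
  then have "distr M (PiM {1..t} (\<lambda>_. borel)) (\<lambda>\<omega>. \<lambda>i\<in>{1..t}. X i \<omega>)
      = PiM {1..t} (\<lambda>i. distr M borel (X i))"
    using indep_vars_iff_distr_eq_PiM'[OF ne rv] by simp
  also have "\<dots> = PiM {1..t} (\<lambda>_. unif)"
    using assms(4) by (intro PiM_cong) (auto simp: unif_def)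
  finally show ?thesis .
qed

lemma prob_tau_le_ge:
  fixes X :: "nat \<Rightarrow> 'a \<Rightarrow> real" and t :: nat
  assumes eps: "0 < eps" "eps < 1" and M: "prob_space M"
    and X: "\<forall>i\<ge>1. X i \<in> borel_measurable M"
    and indep: "prob_space.indep_vars M (\<lambda>_. borel) X {1..}"
    and unif: "\<forall>i\<ge>1. distr M borel (X i) = uniform_measure lborel {-1..1}" and t: "1 \<le> t"
  shows "1 - exp (1 - 65 * ln eps) * (63/64)^t \<le> measure M {\<omega> \<in> space M. tau eps X \<omega> \<le> enat t}"
proof -
  interpret prob_space M by (rule M)
  let ?P = "PiM {1..t} (\<lambda>_. unif)"
  define F where "F \<omega> = (\<lambda>i\<in>{1..t}. X i \<omega>)" for \<omega>
  define E where "E = {x \<in> space ?P. covered_measure eps x t < 2 - eps}"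
  have "random_variable borel (X i)" if "i \<in> {1..t}" for i using X that by auto
  then have F: "F \<in> measurable M (PiM {1..t} (\<lambda>_. borel))"
    unfolding F_def by measurable
  have distr_F: "distr M (PiM {1..t} (\<lambda>_. borel)) F = ?P"
    unfolding F_def by (rule distr_restrict_eq_PiM_unif[OF M X indep unif t])
  have "E \<in> sets ?P"
    unfolding E_def by (intro borel_measurable_less borel_measurable_covered_measure) auto
  moreover have "sets ?P = sets (PiM {1..t} (\<lambda>_. borel))"
    by (rule sets_PiM_cong) auto
  ultimately have E: "E \<in> sets (PiM {1..t} (\<lambda>_. borel))" by simp
  have "covered_measure eps (F \<omega>) t = covered_measure eps (\<lambda>i. X i \<omega>) t" for \<omega>
    unfolding covered_measure_def F_def by (subst covered_cong[of t "\<lambda>i. X i \<omega>"]) auto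
  then have preimage: "F -` E \<inter> space M = {\<omega> \<in> space M. covered_measure eps (\<lambda>i. X i \<omega>) t < 2 - eps}"
    unfolding E_def by (auto simp: space_PiM F_def)
  have "prob {\<omega> \<in> space M. covered_measure eps (\<lambda>i. X i \<omega>) t < 2 - eps} = measure ?P E"
    unfolding preimage[symmetric] distr_F[symmetric] using F E by (simp add: measure_distr)
  also have "\<dots> \<le> exp (1 - 65 * ln eps) * (63/64)^t"
    unfolding E_def using eps by (rule prob_uncovered_le)
  finally have "prob {\<omega> \<in> space M. covered_measure eps (\<lambda>i. X i \<omega>) t < 2 - eps}
      \<le> exp (1 - 65 * ln eps) * (63/64)^t" .
  moreover have "{\<omega> \<in> space M. tau eps X \<omega> \<le> enat t}
      = space M - {\<omega> \<in> space M. covered_measure eps (\<lambda>i. X i \<omega>) t < 2 - eps}"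
    using eps by (auto simp: tau_le_enat_iff)
  moreover have "{\<omega> \<in> space M. covered_measure eps (\<lambda>i. X i \<omega>) t < 2 - eps} \<in> events"
    unfolding preimage[symmetric] using F E by (rule measurable_sets)
  ultimately show ?thesis using prob_compl by simp
qed

text \<open>4352 = 64 * 68: since L = ln(1/eps) \<ge> 1/3, the exponent 1 + 65 L - t/64 is at most
  -(t - 4352 L)/64, and (t - 4352 L)^2/t \<le> t - 4352 L.\<close>

lemma geometric_tail_le_subgaussian:
  fixes eps :: real and t :: nat
  assumes eps: "0 < eps" "eps < 1/3" and t: "4352 * ln (1/eps) \<le> real t"
  shows "exp (1 - 65 * ln eps) * (63/64)^t \<le> 2 * exp (- (1 / (64 * real t)) * (real t - 4352 * ln (1/eps))^2)"
proof -
  define L where "L = ln (1/eps)"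
  have ln_eps: "ln eps = - L" unfolding L_def using eps by (simp add: ln_div)
  have "ln eps \<le> eps - 1" using ln_le_minus_one[OF eps(1)] .
  then have L: "2/3 \<le> L" using eps ln_eps by simp
  then have t_pos: "0 < real t" using t unfolding L_def[symmetric] by simp
  define d where "d = real t - 4352 * L"
  have d: "0 \<le> d" "d \<le> real t" using t L unfolding d_def L_def by auto
  have "(63/64::real)^t \<le> exp (-1/64)^t"
    using exp_ge_add_one_self[of "-1/64::real"] by (intro power_mono) auto
  also have "\<dots> = exp (- real t / 64)" by (simp flip: exp_of_nat_mult)
  finally have "exp (1 - 65 * ln eps) * (63/64)^t \<le> exp (1 + 65 * L) * exp (- real t / 64)"
    unfolding ln_eps by (simp add: mult_left_mono)
  also have "\<dots> = exp (1 + 65 * L - real t / 64)" by (simp flip: exp_add)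
  also have "\<dots> \<le> exp (- (1 / (64 * real t)) * d^2)"
  proof (intro exp_mono)
    have "d^2 \<le> d * real t" unfolding power2_eq_square using d by (intro mult_left_mono) auto
    then have "d^2 / (64 * real t) \<le> d / 64" using t_pos by (simp add: field_simps)
    then show "1 + 65 * L - real t / 64 \<le> - (1 / (64 * real t)) * d^2"
      unfolding d_def using L by simp
  qed
  also have "\<dots> \<le> 2 * exp (- (1 / (64 * real t)) * d^2)" by simp
  finally show ?thesis unfolding d_def L_def .
qed

theorem lemma7:
  shows "\<exists>C'>0. \<exists>\<kappa>>0. \<forall>(eps::real) (M::'a measure) (X::nat \<Rightarrow> 'a \<Rightarrow> real).
    (0 < eps \<and> eps < 1/3 \<and> prob_space M \<and>
     (\<forall>i\<ge>1. X i \<in> borel_measurable M) \<and>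
     prob_space.indep_vars M (\<lambda>_. borel) X {1..} \<and>
     (\<forall>i\<ge>1. distr M borel (X i) = uniform_measure lborel {-1..1}))
    \<longrightarrow> (\<forall>t::nat. real t \<ge> C' * ln (1/eps) \<longrightarrow>
          measure M {\<omega> \<in> space M. tau eps X \<omega> \<le> enat t}
            \<ge> 1 - 2 * exp (- (1 / (\<kappa> * real t)) * (real t - C' * ln (1/eps))^2))"
proof (rule exI[of _ 4352], intro conjI exI[of _ 64] allI impI)
  fix eps :: real and M :: "'a measure" and X :: "nat \<Rightarrow> 'a \<Rightarrow> real" and t :: nat
  assume hyps: "0 < eps \<and> eps < 1/3 \<and> prob_space M \<and>
     (\<forall>i\<ge>1. X i \<in> borel_measurable M) \<and>
     prob_space.indep_vars M (\<lambda>_. borel) X {1..} \<and>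
     (\<forall>i\<ge>1. distr M borel (X i) = uniform_measure lborel {-1..1})"
    and t: "4352 * ln (1/eps) \<le> real t"
  then have eps: "0 < eps" "eps < 1/3" by auto
  then have "1 \<le> t" using t by (cases t) auto
  then have "1 - exp (1 - 65 * ln eps) * (63/64)^t \<le> measure M {\<omega> \<in> space M. tau eps X \<omega> \<le> enat t}"
    using hyps by (intro prob_tau_le_ge) auto
  moreover have "exp (1 - 65 * ln eps) * (63/64)^t
      \<le> 2 * exp (- (1 / (64 * real t)) * (real t - 4352 * ln (1/eps))^2)"
    using eps t by (rule geometric_tail_le_subgaussian)
  ultimately show "1 - 2 * exp (- (1 / (64 * real t)) * (real t - 4352 * ln (1/eps))^2)
      \<le> measure M {\<omega> \<in> space M. tau eps X \<omega> \<le> enat t}" by simp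
qed simp_all

end
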